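(* Let $M=\frac{1}{3^{2/3}-2}$. Let the open intervals $J_n^k\subset[0,M]$ ($n\ge 1$, $1\le k\le 2^{n-1}$) be constructed as follows: $J_1^1$ is the open interval of length $3^{-2/3}$ centered at the midpoint of $[0,M]$; for $n\ge 2$, the intervals $J_n^1,\dots,J_n^{2^{n-1}}$ are the open intervals of length $(3^{2/3})^{-n}$ centered at the midpoints of the $2^{n-1}$ connected components of $[0,M]\setminus(J_1\cup\dots\cup J_{n-1})$, where $J_m=\bigcup_{k=1}^{2^{m-1}}J_m^k$. Let $A=[0,M]\setminus\bigcup_{n\ge1}J_n$. Define $g:[0,M]\to\mathbb{R}$ by $g=0$ on $A$ and $g(x)=\frac{4}{\mathcal{L}(J_n^k)^{1/2}}\mathrm{dist}(x,\partial J_n^k)$ for $x\in J_n^k$, and define $f:[0,M]\to[0,1]$ by $f(x)=\int_0^x g(t)\,dt$. Let $C\subset[0,1]$ be the ternary Cantor set. Then: (1) $f$ is $C^1$; (2) $f'(x)=0$ if and only if $x\in A$; (3) $f(A)=C$.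
   Context: $\mathcal{L}$ denotes Lebesgue measure (length); $\partial J$ is the set of endpoints of an interval $J$. The ternary Cantor set is $C=[0,1]\setminus\bigcup_{n\ge1}\bigcup_{k=1}^{2^{n-1}}I_n^k$, where the open intervals $I_n^k$ of length $3^{-n}$ are centered at the midpoints of the connected components of $[0,1]$ minus the previously removed intervals of stages $1,\dots,n-1$. *)

theory Defs
  imports "HOL-Analysis.Analysis"
begin

definition centered_int :: "real \<Rightarrow> real \<Rightarrow> real set" where
  "centered_int c l = {c - l/2 <..< c + l/2}"

primrec removed_upto :: "real \<Rightarrow> real \<Rightarrow> nat \<Rightarrow> real set set" where
  "removed_upto L r 0 = {}"
| "removed_upto L r (Suc n) = removed_upto L r n \<union>
     {centered_int ((Inf K + Sup K) / 2) (r powr (- real (Suc n))) | K.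
        K \<in> components ({0..L} - \<Union>(removed_upto L r n))}"

definition removed_all :: "real \<Rightarrow> real \<Rightarrow> real set set" where
  "removed_all L r = (\<Union>n. removed_upto L r n)"

definition cantor_set :: "real set" where
  "cantor_set = {0..1} - \<Union>(removed_all 1 3)"

definition Mc :: real where
  "Mc = 1 / (3 powr (2/3) - 2)"

definition Jall :: "real set set" where
  "Jall = removed_all Mc (3 powr (2/3))"

definition Aset :: "real set" where
  "Aset = {0..Mc} - \<Union>Jall"

definition gfun :: "real \<Rightarrow> real" where
  "gfun x = (if x \<in> Aset then 0 else
     (let I = (THE I. I \<in> Jall \<and> x \<in> I) in
        4 / sqrt (measure lebesgue I) * infdist x (frontier I)))"

definition ffun :: "real \<Rightarrow> real" where
  "ffun x = integral {0..x} gfun"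

end

theory Submission
  imports Defs
begin

(* For every ratio r > 2 the construction on [0, 1/(r-2)] is self-similar: the stage-n survivors
   are 2^n intervals of length r^-n/(r-2), indexed by binary addresses, and the same addresses
   index the survivors of the ternary Cantor set (r = 3).  For r = 3^(2/3), g is a tent of height
   2*3^(-m/3) on each interval J removed at stage m and vanishes on A, so g is continuous; its
   integral over J is |J|^(3/2) = 3^-m, the length of the Cantor interval removed at stage m.
   Hence the integral T_n of g over a stage-n survivor is the sum of the integrals over its two
   children plus 3^-(n+1); together with T_n = O(3^-n) this forces T_n = 3^-n.  So f maps the
   endpoints of survivors to those of the Cantor survivors, hence A into C, and each removed
   interval (on which f is strictly increasing) into the corresponding Cantor gap; the
   intermediate value theorem then gives f(A) = C. *)

lemma components_Union_closed_disjoint: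
  fixes F :: "'a::topological_space set set"
  assumes fin: "finite F"
    and F: "\<And>C. C \<in> F \<Longrightarrow> closed C \<and> connected C \<and> C \<noteq> {}"
    and disj: "pairwise disjnt F"
  shows "components (\<Union>F) = F"
proof -
  have comp: "C \<in> components (\<Union>F)" if C: "C \<in> F" for C
    unfolding in_components_maximal
  proof (intro conjI allI impI)
    show "C \<noteq> {}" "connected C" using F[OF C] by auto
    show "C \<subseteq> \<Union>F" using C by blast
    fix D assume D: "D \<noteq> {} \<and> C \<subseteq> D \<and> D \<subseteq> \<Union>F \<and> connected D"
    have "closed (\<Union>(F - {C}))" using fin F by (intro closed_Union) auto
    moreover have "C \<inter> \<Union>(F - {C}) = {}"
      using disj C by (auto simp: pairwise_def disjnt_def)
    moreover have "D \<subseteq> C \<union> \<Union>(F - {C})" using D by blast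
    ultimately have "C \<inter> D = {} \<or> \<Union>(F - {C}) \<inter> D = {}"
      using connected_closedD[of D C "\<Union>(F - {C})"] D F[OF C] by blast
    then show "D = C" using D F[OF C] by blast
  qed
  moreover have "K \<in> F" if K: "K \<in> components (\<Union>F)" for K
  proof -
    obtain x where "x \<in> K" using K in_components_nonempty by blast
    then obtain C where "C \<in> F" "x \<in> C" using K in_components_subset by blast
    then show ?thesis using components_eq[OF K comp] \<open>x \<in> K\<close> by blast
  qed
  ultimately show ?thesis by blast
qed

(* Each split at most doubles the number of terms, while the bound shrinks by the factor c > 2. *)
lemma split_decay_eq_0:
  fixes E :: "nat \<Rightarrow> 'a \<Rightarrow> real"
  assumes c: "2 < c"
    and decay: "\<And>n a. a \<in> S n \<Longrightarrow> \<bar>E n a\<bar> \<le> K / c ^ n"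
    and split: "\<And>n a. a \<in> S n \<Longrightarrow>
      \<exists>b b'. b \<in> S (Suc n) \<and> b' \<in> S (Suc n) \<and> E n a = E (Suc n) b + E (Suc n) b'"
    and a: "a \<in> S n"
  shows "E n a = 0"
proof -
  have bound: "\<bar>E n a\<bar> \<le> K / c ^ n * (2 / c) ^ k" if "a \<in> S n" for k n a
    using that
  proof (induction k arbitrary: n a)
    case 0
    then show ?case using decay by simp
  next
    case (Suc k)
    obtain b b' where "b \<in> S (Suc n)" "b' \<in> S (Suc n)" "E n a = E (Suc n) b + E (Suc n) b'"
      using split[OF Suc.prems] by blast
    then have "\<bar>E n a\<bar> \<le> K / c ^ Suc n * (2 / c) ^ k + K / c ^ Suc n * (2 / c) ^ k"
      using Suc.IH[of b "Suc n"] Suc.IH[of b' "Suc n"] by linarith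
    also have "\<dots> = K / c ^ n * (2 / c) ^ Suc k"
      using c by (simp add: field_simps)
    finally show ?case .
  qed
  have "(\<lambda>k. K / c ^ n * (2 / c) ^ k) \<longlonglongrightarrow> 0"
    using c by (intro tendsto_mult_right_zero LIMSEQ_power_zero) auto
  then have "\<bar>E n a\<bar> \<le> 0"
    using bound[OF a] by (intro LIMSEQ_le_const) auto
  then show ?thesis by simp
qed

lemma frontier_Ioo: "(p::real) < q \<Longrightarrow> frontier {p<..<q} = {p, q}"
  unfolding frontier_def by (auto simp: interior_open)

definition tent :: "real \<Rightarrow> real \<Rightarrow> real \<Rightarrow> real" where
  "tent p q x = 4 / sqrt (q - p) * min (x - p) (q - x)"

lemma tent_pos: "p < x \<Longrightarrow> x < q \<Longrightarrow> 0 < tent p q x"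
  by (simp add: tent_def)

lemma tent_le: "tent p q x \<le> 2 * sqrt (q - p)" if "p < q"
proof -
  have "min (x - p) (q - x) \<le> (q - p) / 2" by (auto simp: min_def)
  then have "tent p q x \<le> 4 / sqrt (q - p) * ((q - p) / 2)"
    unfolding tent_def using that by (intro mult_left_mono) auto
  also have "\<dots> = 2 * sqrt (q - p)"
    using that by (simp add: field_simps real_div_sqrt)
  finally show ?thesis .
qed

lemma tent_le_dist:
  assumes "p < q" "y \<notin> {p<..<q}"
  shows "tent p q x \<le> 4 / sqrt (q - p) * \<bar>x - y\<bar>"
proof -
  have "min (x - p) (q - x) \<le> \<bar>x - y\<bar>" using assms(2) by auto
  then show ?thesis unfolding tent_def using assms(1) by (intro mult_left_mono) auto
qed

lemma has_integral_tent:
  assumes "p < q"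
  shows "(tent p q has_integral (q - p) * sqrt (q - p)) {p..q}"
proof -
  define c where "c = 4 / sqrt (q - p)"
  define m where "m = (p + q) / 2"
  have pm: "p \<le> m" "m \<le> q" using assms by (auto simp: m_def)
  have left: "((\<lambda>x. c * (x - p)) has_integral c * (m - p)^2 / 2) {p..m}"
  proof -
    have "((\<lambda>x. c * (x - p)^2 / 2) has_real_derivative c * (x - p)) (at x within {p..m})" for x
      by (auto intro!: derivative_eq_intros simp: power2_eq_square field_simps)
    then have "((\<lambda>x. c * (x - p)) has_integral c * (m - p)^2 / 2 - c * (p - p)^2 / 2) {p..m}"
      by (intro fundamental_theorem_of_calculus[OF pm(1)])
        (simp add: has_real_derivative_iff_has_vector_derivative)
    then show ?thesis by simp
  qed
  have right: "((\<lambda>x. c * (q - x)) has_integral c * (q - m)^2 / 2) {m..q}"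
  proof -
    have "((\<lambda>x. - c * (q - x)^2 / 2) has_real_derivative c * (q - x)) (at x within {m..q})" for x
      by (auto intro!: derivative_eq_intros simp: power2_eq_square field_simps)
    then have "((\<lambda>x. c * (q - x)) has_integral - c * (q - q)^2 / 2 - - c * (q - m)^2 / 2) {m..q}"
      by (intro fundamental_theorem_of_calculus[OF pm(2)])
        (simp add: has_real_derivative_iff_has_vector_derivative)
    then show ?thesis by simp
  qed
  have "(tent p q has_integral c * (m - p)^2 / 2) {p..m}"
    by (rule has_integral_eq[OF _ left]) (auto simp: tent_def c_def m_def min_def)
  moreover have "(tent p q has_integral c * (q - m)^2 / 2) {m..q}"
    by (rule has_integral_eq[OF _ right]) (auto simp: tent_def c_def m_def min_def)
  ultimately have "(tent p q has_integral c * (m - p)^2 / 2 + c * (q - m)^2 / 2) {p..q}"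
    by (rule has_integral_combine[OF pm])
  moreover have "c * (m - p)^2 / 2 + c * (q - m)^2 / 2 = (q - p) * ((q - p) / sqrt (q - p))"
    using assms by (simp add: c_def m_def power2_eq_square field_simps)
  moreover have "(q - p) / sqrt (q - p) = sqrt (q - p)"
    using assms by (simp add: real_div_sqrt)
  ultimately show ?thesis by simp
qed

(* With total length 1/(r-2), removing the central interval of length r^-(n+1) from a stage-n
   survivor of length len n leaves two survivors of length len (Suc n) (len_split).  The
   stage-n survivor with address w is {left_end n w..left_end n w + len n}, where w i says
   whether the right part was kept at step i; gap n a is the interval removed at stage n + 1
   from the survivor starting at a. *)
locale self_similar_cantor =
  fixes r :: real
  assumes ratio_gt_2: "2 < r"
begin

definition total :: real where "total = 1 / (r - 2)"

definition len :: "nat \<Rightarrow> real" where "len n = total / r ^ n"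

definition shift :: "nat \<Rightarrow> real" where "shift n = len n - len (Suc n)"

definition left_end :: "nat \<Rightarrow> (nat \<Rightarrow> bool) \<Rightarrow> real" where
  "left_end n w = (\<Sum>i<n. if w i then shift i else 0)"

definition left_ends :: "nat \<Rightarrow> real set" where "left_ends n = range (left_end n)"

definition survivors :: "nat \<Rightarrow> real set" where
  "survivors n = (\<Union>a\<in>left_ends n. {a..a + len n})"

definition gap :: "nat \<Rightarrow> real \<Rightarrow> real set" where
  "gap n a = {a + len (Suc n)<..<a + shift n}"

lemma total_pos: "0 < total"
  using ratio_gt_2 by (simp add: total_def)

lemma len_pos: "0 < len n"
  using total_pos ratio_gt_2 by (simp add: len_def)

lemma len_0: "len 0 = total"
  by (simp add: len_def)

lemma len_split: "len n = 2 * len (Suc n) + 1 / r ^ Suc n"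
proof -
  have "total * r = 2 * total + 1"
    using ratio_gt_2 by (simp add: total_def field_simps)
  then show ?thesis
    using ratio_gt_2 by (simp add: len_def field_simps)
qed

lemma shift_eq: "shift n = len (Suc n) + 1 / r ^ Suc n"
  using len_split[of n] by (simp add: shift_def)

lemma shift_add_len: "shift n + len (Suc n) = len n"
  by (simp add: shift_def)

lemma len_Suc_less_shift: "len (Suc n) < shift n"
  using shift_eq[of n] ratio_gt_2 by simp

lemma shift_less_len: "shift n < len n"
  using shift_add_len[of n] len_pos[of "Suc n"] by linarith

lemma left_end_0: "left_end 0 w = 0"
  by (simp add: left_end_def)

lemma left_end_Suc: "left_end (Suc n) w = left_end n w + (if w n then shift n else 0)"
  by (simp add: left_end_def)

lemma left_end_upd: "left_end n (w(n := b)) = left_end n w"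
  unfolding left_end_def by (rule sum.cong) auto

lemma left_ends_0: "left_ends 0 = {0}"
  by (auto simp: left_ends_def left_end_0)

lemma left_ends_Suc: "left_ends (Suc n) = left_ends n \<union> (\<lambda>a. a + shift n) ` left_ends n"
proof
  show "left_ends (Suc n) \<subseteq> left_ends n \<union> (\<lambda>a. a + shift n) ` left_ends n"
    by (auto simp: left_ends_def left_end_Suc)
  have "left_end n w = left_end (Suc n) (w(n := False))"
    and "left_end n w + shift n = left_end (Suc n) (w(n := True))" for w
    by (simp_all add: left_end_Suc left_end_upd)
  then show "left_ends n \<union> (\<lambda>a. a + shift n) ` left_ends n \<subseteq> left_ends (Suc n)"
    unfolding left_ends_def by (auto simp del: fun_upd_apply)
qed

lemma finite_left_ends: "finite (left_ends n)"
  by (induction n) (auto simp: left_ends_0 left_ends_Suc)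

lemma left_ends_bounds: "a \<in> left_ends n \<Longrightarrow> 0 \<le> a \<and> a + len n \<le> total"
proof (induction n arbitrary: a)
  case 0
  then show ?case by (simp add: left_ends_0 len_0)
next
  case (Suc n)
  then obtain b where "b \<in> left_ends n" "a = b \<or> a = b + shift n"
    by (auto simp: left_ends_Suc)
  then show ?case
    using Suc.IH[of b] shift_add_len[of n] len_Suc_less_shift[of n] len_pos[of "Suc n"]
    by auto
qed

lemma left_ends_apart:
  "a \<in> left_ends n \<Longrightarrow> a' \<in> left_ends n \<Longrightarrow> a \<noteq> a' \<Longrightarrow>
     a + len n + 1 / r ^ n \<le> a' \<or> a' + len n + 1 / r ^ n \<le> a"
proof (induction n arbitrary: a a')
  case 0
  then show ?case by (simp add: left_ends_0)
next
  case (Suc n)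
  have "1 / r ^ Suc n \<le> 1 / r ^ n"
    using ratio_gt_2 by (simp add: divide_simps)
  note arith = this len_split[of n] shift_eq[of n] len_pos[of n] len_pos[of "Suc n"]
  obtain b b' where b: "b \<in> left_ends n" "a = b \<or> a = b + shift n"
    and b': "b' \<in> left_ends n" "a' = b' \<or> a' = b' + shift n"
    using Suc.prems by (auto simp: left_ends_Suc)
  show ?case
  proof (cases "b = b'")
    case True
    then show ?thesis using b(2) b'(2) Suc.prems(3) arith
      by (elim disjE) linarith+
  next
    case False
    then show ?thesis using Suc.IH[OF b(1) b'(1)] b(2) b'(2) arith
      by (elim disjE) linarith+
  qed
qed

lemma survivor_intervals_disjoint:
  assumes "a \<in> left_ends n" "a' \<in> left_ends n" "a \<noteq> a'"
  shows "{a..a + len n} \<inter> {a'..a' + len n} = {}"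
proof -
  define e where "e = 1 / r ^ n"
  have "0 < e" using ratio_gt_2 by (simp add: e_def)
  then show ?thesis using left_ends_apart[OF assms] unfolding e_def[symmetric] by auto
qed

lemma components_survivors: "components (survivors n) = (\<lambda>a. {a..a + len n}) ` left_ends n"
  unfolding survivors_def image_image[symmetric, of Union]
proof (rule components_Union_closed_disjoint)
  show "finite ((\<lambda>a. {a..a + len n}) ` left_ends n)"
    using finite_left_ends by simp
  show "closed C \<and> connected C \<and> C \<noteq> {}" if "C \<in> (\<lambda>a. {a..a + len n}) ` left_ends n" for C
    using that len_pos[of n] by auto
  show "pairwise disjnt ((\<lambda>a. {a..a + len n}) ` left_ends n)"
    using survivor_intervals_disjoint by (auto simp: pairwise_def disjnt_def)
qed

lemma gap_subset: "gap n a \<subseteq> {a..a + len n}"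
  using len_pos[of "Suc n"] shift_add_len[of n] by (auto simp: gap_def)

lemma survivor_minus_gap:
  "{a..a + len n} - gap n a = {a..a + len (Suc n)} \<union> {a + shift n..a + shift n + len (Suc n)}"
  using shift_add_len[of n] len_Suc_less_shift[of n] len_pos[of "Suc n"]
  by (auto simp: gap_def)

lemma survivors_Suc: "survivors (Suc n) = survivors n - \<Union>(gap n ` left_ends n)"
proof -
  have "survivors n - \<Union>(gap n ` left_ends n) = (\<Union>a\<in>left_ends n. {a..a + len n} - gap n a)"
    using survivor_intervals_disjoint[of _ n] gap_subset[of n] unfolding survivors_def by blast
  also have "\<dots> = survivors (Suc n)"
    unfolding survivor_minus_gap survivors_def left_ends_Suc by blast
  finally show ?thesis by simp
qed

lemma centered_int_survivor:
  "centered_int ((Inf {a..a + len n} + Sup {a..a + len n}) / 2) (r powr - real (Suc n)) = gap n a"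
proof -
  define e where "e = 1 / r ^ Suc n"
  have "r powr - real (Suc n) = inverse (r powr real (Suc n))"
    by (rule powr_minus)
  also have "\<dots> = e"
    using ratio_gt_2 by (simp only: powr_realpow inverse_eq_divide e_def)
  finally have powr_eq: "r powr - real (Suc n) = e" .
  have split: "len n = 2 * len (Suc n) + e" "shift n = len (Suc n) + e"
    unfolding e_def by (fact len_split shift_eq)+
  have "(a + (a + len n)) / 2 - e / 2 = a + len (Suc n)"
    and "(a + (a + len n)) / 2 + e / 2 = a + shift n"
    unfolding split by (simp_all add: field_simps)
  then show ?thesis
    unfolding centered_int_def gap_def powr_eq using len_pos[of n] by simp
qed

lemma removed_upto_survivors:
  "{0..total} - \<Union>(removed_upto total r n) = survivors n \<and>
   removed_upto total r n = {gap m a | m a. m < n \<and> a \<in> left_ends m}"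
proof (induction n)
  case 0
  then show ?case by (simp add: survivors_def left_ends_0 len_0)
next
  case (Suc n)
  have survivors_n: "{0..total} - \<Union>(removed_upto total r n) = survivors n"
    using Suc.IH by blast
  have "{centered_int ((Inf K + Sup K) / 2) (r powr - real (Suc n)) | K.
      K \<in> components (survivors n)} = gap n ` left_ends n"
    unfolding components_survivors using centered_int_survivor by auto
  then have removed_Suc: "removed_upto total r (Suc n) = removed_upto total r n \<union> gap n ` left_ends n"
    by (simp only: removed_upto.simps survivors_n)
  have "{0..total} - \<Union>(removed_upto total r (Suc n)) = survivors n - \<Union>(gap n ` left_ends n)"
    unfolding removed_Suc survivors_n[symmetric] by blast
  then show ?case
    unfolding removed_Suc survivors_Suc using Suc.IH less_Suc_eq by auto
qed

lemma removed_all_eq: "removed_all total r = {gap m a | m a. a \<in> left_ends m}"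
  unfolding removed_all_def using removed_upto_survivors by auto

lemma diff_removed_all: "{0..total} - \<Union>(removed_all total r) = (\<Inter>n. survivors n)"
proof -
  have "{0..total} - \<Union>(removed_all total r) = (\<Inter>n. {0..total} - \<Union>(removed_upto total r n))"
    by (auto simp: removed_all_def)
  moreover have "{0..total} - \<Union>(removed_upto total r n) = survivors n" for n
    using removed_upto_survivors by blast
  ultimately show ?thesis by simp
qed

lemma survivors_antimono: "m \<le> n \<Longrightarrow> survivors n \<subseteq> survivors m"
  by (rule lift_Suc_antimono_le[of survivors]) (auto simp: survivors_Suc)

lemma gap_disjoint_survivors_Suc: "a \<in> left_ends m \<Longrightarrow> gap m a \<inter> survivors (Suc m) = {}"
  by (auto simp: survivors_Suc)

lemma gap_subset_survivors: "a \<in> left_ends m \<Longrightarrow> gap m a \<subseteq> survivors m"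
  using gap_subset[of m a] by (auto simp: survivors_def)

lemma gap_unique:
  assumes "a \<in> left_ends m" "a' \<in> left_ends m'" "x \<in> gap m a" "x \<in> gap m' a'"
  shows "m = m' \<and> a = a'"
proof -
  have not_less: "\<not> m < m'"
    if "a \<in> left_ends m" "a' \<in> left_ends m'" "x \<in> gap m a" "x \<in> gap m' a'" for m m' a a'
  proof
    assume "m < m'"
    then have "x \<in> survivors (Suc m)"
      using gap_subset_survivors[OF that(2)] that(4) survivors_antimono[of "Suc m" m'] by auto
    then show False using gap_disjoint_survivors_Suc[OF that(1)] that(3) by auto
  qed
  have "m = m'" using not_less assms by (meson linorder_neqE_nat)
  moreover have "a = a'"
    using survivor_intervals_disjoint[of a m a'] gap_subset[of m a] gap_subset[of m a'] assms \<open>m = m'\<close>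
    by blast
  ultimately show ?thesis by simp
qed

end

lemma three_powr_two_thirds: "3 powr (2/3) = root 3 3 ^ 2"
proof -
  have "root 3 3 ^ 2 = (3 powr (1/3)) powr 2"
    by (simp add: root_powr_inverse powr_realpow)
  then show ?thesis by (simp add: powr_powr)
qed

lemma root_3_3_power_cube: "(root 3 3 ^ n) ^ 3 = 3 ^ n"
  by (metis power_mult mult.commute real_root_pow_pos2 zero_less_numeral zero_le_numeral)

lemma two_less_three_powr_two_thirds: "2 < (3::real) powr (2/3)"
proof -
  have "(root 3 3 ^ 2) ^ 3 = (root 3 3 ^ 3) ^ 2"
    by (simp only: power_mult[symmetric] mult.commute)
  then have "(2::real) ^ 3 < (root 3 3 ^ 2) ^ 3" by simp
  then show ?thesis
    unfolding three_powr_two_thirds by (rule power_less_imp_less_base) simp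
qed

(* J yields the intervals J_n^k of the paper and C the ternary Cantor set; note that J.gap m a
   is an interval of stage m + 1. *)
interpretation J: self_similar_cantor "3 powr (2/3)"
  by unfold_locales (rule two_less_three_powr_two_thirds)

interpretation C: self_similar_cantor 3
  by unfold_locales simp

lemma Mc_eq: "Mc = J.total"
  by (simp add: Mc_def J.total_def)

lemma Jall_eq: "Jall = {J.gap m a | m a. a \<in> J.left_ends m}"
  unfolding Jall_def Mc_eq by (rule J.removed_all_eq)

lemma Aset_eq: "Aset = (\<Inter>n. J.survivors n)"
  unfolding Aset_def Jall_def Mc_eq by (rule J.diff_removed_all)

lemma C_total: "C.total = 1"
  by (simp add: C.total_def)

lemma cantor_set_eq: "cantor_set = (\<Inter>n. C.survivors n)"
  using C.diff_removed_all by (simp add: cantor_set_def C_total)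

lemma removed_all_cantor: "removed_all 1 3 = {C.gap m a | m a. a \<in> C.left_ends m}"
  using C.removed_all_eq by (simp add: C_total)

lemma C_len: "C.len n = 1 / 3 ^ n"
  by (simp add: C.len_def C_total)

lemma C_shift: "C.shift n = 2 / 3 ^ Suc n"
  by (simp add: C.shift_def C_len field_simps)

lemma three_powr_two_thirds_power: "(3 powr (2/3)) ^ n = (root 3 3 ^ n)^2"
  unfolding three_powr_two_thirds by (simp only: power_mult[symmetric] mult.commute)

lemma J_len: "J.len n = J.total / (root 3 3 ^ n)^2"
  by (simp add: J.len_def three_powr_two_thirds_power)

lemma J_gap_length: "J.shift m - J.len (Suc m) = 1 / (root 3 3 ^ Suc m)^2"
  using J.shift_eq[of m] three_powr_two_thirds_power[of "Suc m"] by simp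

lemma the_Jall: "I \<in> Jall \<Longrightarrow> x \<in> I \<Longrightarrow> (THE I. I \<in> Jall \<and> x \<in> I) = I"
  unfolding Jall_eq by (rule the_equality) (use J.gap_unique in blast)+

lemma gap_in_Jall: "a \<in> J.left_ends m \<Longrightarrow> J.gap m a \<in> Jall"
  unfolding Jall_eq by blast

lemma gap_disjoint_Aset: "a \<in> J.left_ends m \<Longrightarrow> x \<in> J.gap m a \<Longrightarrow> x \<notin> Aset"
  unfolding Aset_def Jall_eq by blast

lemma in_gap_if_not_Aset:
  "x \<in> {0..Mc} \<Longrightarrow> x \<notin> Aset \<Longrightarrow> \<exists>m a. a \<in> J.left_ends m \<and> x \<in> J.gap m a"
  unfolding Aset_def Jall_eq by blast

lemma gfun_eq_tent:
  assumes I: "{p<..<q} \<in> Jall" and x: "x \<in> {p<..<q}"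
  shows "gfun x = tent p q x"
proof -
  have pq: "p < q" using x by simp
  have "measure lebesgue {p<..<q} = measure lborel {p<..<q}"
    by (rule measure_completion) simp
  then have measure: "measure lebesgue {p<..<q} = q - p"
    using pq by simp
  have "infdist x ({p} \<union> {q}) = min (infdist x {p}) (infdist x {q})"
    by (rule infdist_Un_min) auto
  then have infdist: "infdist x (frontier {p<..<q}) = min (x - p) (q - x)"
    using x frontier_Ioo[OF pq] by (simp add: dist_real_def insert_commute)
  have "x \<notin> Aset" using I x unfolding Aset_def by blast
  then show ?thesis
    by (simp add: gfun_def the_Jall[OF I x] measure infdist tent_def)
qed

lemma gfun_gap:
  "a \<in> J.left_ends m \<Longrightarrow> x \<in> J.gap m a \<Longrightarrow> gfun x = tent (a + J.len (Suc m)) (a + J.shift m) x"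
  using gfun_eq_tent gap_in_Jall by (simp add: J.gap_def)

lemma sqrt_J_gap_length: "sqrt (J.shift m - J.len (Suc m)) = 1 / root 3 3 ^ Suc m"
  by (simp add: J_gap_length real_sqrt_divide)

lemma gfun_gap_pos: "a \<in> J.left_ends m \<Longrightarrow> x \<in> J.gap m a \<Longrightarrow> 0 < gfun x"
  using gfun_gap tent_pos by (simp add: J.gap_def)

lemma gfun_gap_le: "a \<in> J.left_ends m \<Longrightarrow> x \<in> J.gap m a \<Longrightarrow> gfun x \<le> 2 / root 3 3 ^ Suc m"
  using gfun_gap tent_le[of "a + J.len (Suc m)" "a + J.shift m" x] J.len_Suc_less_shift[of m]
  by (simp add: sqrt_J_gap_length)

lemma gfun_gap_le_dist:
  "a \<in> J.left_ends m \<Longrightarrow> x \<in> J.gap m a \<Longrightarrow> y \<notin> J.gap m a \<Longrightarrow>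
    gfun x \<le> 4 * root 3 3 ^ Suc m * \<bar>x - y\<bar>"
  using gfun_gap tent_le_dist[of "a + J.len (Suc m)" "a + J.shift m" y x] J.len_Suc_less_shift[of m]
  by (simp add: sqrt_J_gap_length J.gap_def)

lemma gfun_Aset: "x \<in> Aset \<Longrightarrow> gfun x = 0"
  by (simp add: gfun_def)

lemma gfun_nonneg: "x \<in> {0..Mc} \<Longrightarrow> 0 \<le> gfun x"
  using in_gap_if_not_Aset gfun_Aset gfun_gap_pos by (metis less_eq_real_def)

lemma gfun_eq_0_iff: "x \<in> {0..Mc} \<Longrightarrow> gfun x = 0 \<longleftrightarrow> x \<in> Aset"
  using in_gap_if_not_Aset gfun_Aset gfun_gap_pos by fastforce

lemma gfun_le_survivor:
  assumes a: "a \<in> J.left_ends n" and y: "y \<in> {a..a + J.len n}"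
  shows "gfun y \<le> 2 / root 3 3 ^ Suc n"
proof (cases "y \<in> Aset")
  case True
  then show ?thesis by (simp add: gfun_Aset)
next
  case False
  have "y \<in> {0..Mc}" using J.left_ends_bounds[OF a] y by (auto simp: Mc_eq)
  then obtain m a' where a': "a' \<in> J.left_ends m" "y \<in> J.gap m a'"
    using in_gap_if_not_Aset False by blast
  have "y \<in> J.survivors n" using a y by (auto simp: J.survivors_def)
  then have "n \<le> m"
    using J.gap_disjoint_survivors_Suc[OF a'(1)] a'(2) J.survivors_antimono[of "Suc m" n]
    by (meson disjoint_iff not_less_eq_eq subsetD)
  then have "2 / root 3 3 ^ Suc m \<le> 2 / root 3 3 ^ Suc n"
    by (intro divide_left_mono power_increasing) auto
  then show ?thesis using gfun_gap_le[OF a'] by linarith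
qed

(* Tents of late stages are low; those of early stages have bounded slope and vanish at x. *)
lemma gfun_le_near_Aset:
  assumes x: "x \<in> Aset" and y: "y \<in> {0..Mc}"
  shows "gfun y \<le> 2 / root 3 3 ^ N + 4 * root 3 3 ^ N * \<bar>y - x\<bar>"
proof (cases "y \<in> Aset")
  case True
  then show ?thesis by (simp add: gfun_Aset)
next
  case False
  then obtain m a where a: "a \<in> J.left_ends m" "y \<in> J.gap m a"
    using in_gap_if_not_Aset y by blast
  show ?thesis
  proof (cases "N \<le> Suc m")
    case True
    then have "2 / root 3 3 ^ Suc m \<le> 2 / root 3 3 ^ N"
      by (intro divide_left_mono power_increasing) auto
    then show ?thesis using gfun_gap_le[OF a] by (simp add: add_increasing2)
  next
    case False
    have "gfun y \<le> 4 * root 3 3 ^ Suc m * \<bar>y - x\<bar>"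
      using gfun_gap_le_dist[OF a] gap_disjoint_Aset[OF a(1)] x by blast
    also have "\<dots> \<le> 4 * root 3 3 ^ N * \<bar>y - x\<bar>"
      using False by (intro mult_right_mono mult_left_mono power_increasing) auto
    finally show ?thesis by (simp add: add_increasing)
  qed
qed

lemma continuous_on_gfun: "continuous_on {0..Mc} gfun"
  unfolding continuous_on_eq_continuous_within
proof
  fix x assume x: "x \<in> {0..Mc}"
  show "continuous (at x within {0..Mc}) gfun"
  proof (cases "x \<in> Aset")
    case False
    then obtain m a where a: "a \<in> J.left_ends m" "x \<in> J.gap m a"
      using in_gap_if_not_Aset x by blast
    define p q where "p = a + J.len (Suc m)" and "q = a + J.shift m"
    have gap: "J.gap m a = {p<..<q}" by (simp add: J.gap_def p_def q_def)
    have "continuous (at x within {0..Mc}) (tent p q)"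
      unfolding tent_def by (intro continuous_intros)
    then show ?thesis
    proof (rule continuous_transform_within[where \<delta> = "min (x - p) (q - x)"])
      show "0 < min (x - p) (q - x)" using a(2) gap by simp
      show "tent p q y = gfun y" if "dist y x < min (x - p) (q - x)" for y
      proof -
        have "y \<in> J.gap m a" using that gap by (auto simp: dist_real_def abs_less_iff)
        then show ?thesis using gfun_gap[OF a(1)] by (simp add: p_def q_def)
      qed
    qed (use x in auto)
  next
    case True
    show ?thesis unfolding continuous_within_eps_delta
    proof (intro allI impI)
      fix \<epsilon> :: real assume "0 < \<epsilon>"
      obtain N where N: "4 / \<epsilon> < root 3 3 ^ N"
        using real_arch_pow[of "root 3 3"] by auto
      define \<delta> where "\<delta> = \<epsilon> / (8 * root 3 3 ^ N)"
      have "gfun y < \<epsilon>" if "y \<in> {0..Mc}" "dist y x < \<delta>" for y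
      proof -
        have "2 / root 3 3 ^ N < \<epsilon> / 2"
          using N \<open>0 < \<epsilon>\<close> by (simp add: field_simps)
        moreover have "4 * root 3 3 ^ N * \<bar>y - x\<bar> < \<epsilon> / 2"
          using that(2) by (simp add: \<delta>_def dist_real_def field_simps)
        ultimately show ?thesis using gfun_le_near_Aset[OF True that(1), of N] by linarith
      qed
      moreover have "0 < \<delta>" using \<open>0 < \<epsilon>\<close> by (simp add: \<delta>_def)
      ultimately show "\<exists>\<delta>>0. \<forall>y\<in>{0..Mc}. dist y x < \<delta> \<longrightarrow> dist (gfun y) (gfun x) < \<epsilon>"
        using gfun_Aset[OF True] gfun_nonneg by (auto simp: dist_real_def)
    qed
  qed
qed

lemma gfun_integrable: "{u..v} \<subseteq> {0..Mc} \<Longrightarrow> gfun integrable_on {u..v}"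
  by (rule integrable_on_subinterval[OF integrable_continuous_interval[OF continuous_on_gfun]])

lemma ffun_has_derivative:
  "x \<in> {0..Mc} \<Longrightarrow> (ffun has_real_derivative gfun x) (at x within {0..Mc})"
  unfolding has_real_derivative_iff_has_vector_derivative ffun_def[abs_def]
  by (rule integral_has_vector_derivative[OF continuous_on_gfun])

lemma continuous_on_ffun: "continuous_on {0..Mc} ffun"
  using ffun_has_derivative by (rule DERIV_continuous_on)

lemma ffun_diff: "0 \<le> u \<Longrightarrow> u \<le> v \<Longrightarrow> v \<le> Mc \<Longrightarrow> ffun v - ffun u = integral {u..v} gfun"
  using Henstock_Kurzweil_Integration.integral_combine[where a=0 and c=u and b=v and f=gfun]
    gfun_integrable[of 0 v]
  by (simp add: ffun_def)

lemma ffun_0: "ffun 0 = 0"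
  by (simp add: ffun_def)

lemma ffun_mono: "0 \<le> u \<Longrightarrow> u \<le> v \<Longrightarrow> v \<le> Mc \<Longrightarrow> ffun u \<le> ffun v"
  using ffun_diff[of u v] integral_nonneg[OF gfun_integrable, of u v] gfun_nonneg by auto

lemma J_gap_bounds: "a \<in> J.left_ends m \<Longrightarrow> 0 \<le> a + J.len (Suc m) \<and> a + J.shift m \<le> Mc"
  using J.left_ends_bounds[of a m] J.len_pos[of "Suc m"] J.shift_less_len[of m] by (simp add: Mc_eq)

lemma ffun_strict_mono_gap:
  assumes a: "a \<in> J.left_ends m"
    and uv: "a + J.len (Suc m) \<le> u" "u < v" "v \<le> a + J.shift m"
  shows "ffun u < ffun v"
proof (rule DERIV_pos_imp_increasing_open[OF uv(2)])
  have sub: "{u..v} \<subseteq> {0..Mc}" using J_gap_bounds[OF a] uv by auto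
  show "continuous_on {u..v} ffun" by (rule continuous_on_subset[OF continuous_on_ffun sub])
  fix x assume x: "u < x" "x < v"
  then have "x \<in> interior {0..Mc}" using sub by auto
  then have "(ffun has_real_derivative gfun x) (at x)"
    using ffun_has_derivative[of x] interior_subset at_within_interior by fastforce
  moreover have "0 < gfun x" using gfun_gap_pos[OF a] x uv by (simp add: J.gap_def)
  ultimately show "\<exists>y. (ffun has_real_derivative y) (at x) \<and> 0 < y" by blast
qed

lemma ffun_gap_increment:
  assumes a: "a \<in> J.left_ends m"
  shows "ffun (a + J.shift m) - ffun (a + J.len (Suc m)) = 1 / 3 ^ Suc m"
proof -
  define p q where "p = a + J.len (Suc m)" and "q = a + J.shift m"
  have pq: "p < q" using J.len_Suc_less_shift[of m] by (simp add: p_def q_def)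
  have "integral {p..q} gfun = integral {p..q} (tent p q)"
  proof (rule integral_spike[of "{p, q}"])
    show "tent p q x = gfun x" if "x \<in> {p..q} - {p, q}" for x
      using that gfun_gap[OF a, of x] by (auto simp: J.gap_def p_def q_def)
  qed simp
  also have "\<dots> = (q - p) * sqrt (q - p)"
    using has_integral_tent[OF pq] by (rule integral_unique)
  also have "\<dots> = 1 / (root 3 3 ^ Suc m) ^ 3"
    unfolding p_def q_def add_diff_cancel_left sqrt_J_gap_length unfolding J_gap_length
    by (simp add: power2_eq_square power3_eq_cube)
  also have "\<dots> = 1 / 3 ^ Suc m"
    by (simp only: root_3_3_power_cube)
  finally show ?thesis
    using ffun_diff[of p q] J_gap_bounds[OF a] pq by (simp add: p_def q_def)
qed

lemma ffun_survivor_increment_bounds: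
  assumes a: "a \<in> J.left_ends n"
  shows "0 \<le> ffun (a + J.len n) - ffun a" and "ffun (a + J.len n) - ffun a \<le> 2 * J.total / 3 ^ n"
proof -
  have sub: "{a..a + J.len n} \<subseteq> {0..Mc}"
    using J.left_ends_bounds[OF a] by (auto simp: Mc_eq)
  have diff: "ffun (a + J.len n) - ffun a = integral {a..a + J.len n} gfun"
    using ffun_diff J.left_ends_bounds[OF a] J.len_pos[of n] by (simp add: Mc_eq)
  show "0 \<le> ffun (a + J.len n) - ffun a"
    unfolding diff using sub gfun_nonneg by (intro integral_nonneg[OF gfun_integrable[OF sub]]) auto
  have "integral {a..a + J.len n} gfun \<le> integral {a..a + J.len n} (\<lambda>_. 2 / root 3 3 ^ Suc n)"
    using gfun_le_survivor[OF a] by (intro integral_le[OF gfun_integrable[OF sub]]) auto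
  also have "\<dots> = J.len n * (2 / root 3 3 ^ Suc n)"
    using J.len_pos[of n] by simp
  also have "\<dots> = 2 * J.total / ((root 3 3 ^ n) ^ 3 * root 3 3)"
    by (simp add: J_len power2_eq_square power3_eq_cube mult_ac)
  also have "\<dots> \<le> 2 * J.total / 3 ^ n"
    unfolding root_3_3_power_cube using J.total_pos by (intro divide_left_mono) auto
  finally show "ffun (a + J.len n) - ffun a \<le> 2 * J.total / 3 ^ n"
    unfolding diff .
qed

lemma ffun_survivor_increment:
  assumes a: "a \<in> J.left_ends n"
  shows "ffun (a + J.len n) - ffun a = 1 / 3 ^ n"
proof -
  define E where "E n a = ffun (a + J.len n) - ffun a - 1 / 3 ^ n" for n a
  have "E n a = 0"
  proof (rule split_decay_eq_0[of 3 J.left_ends E "2 * J.total + 1", OF _ _ _ a])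
    show "\<bar>E n a\<bar> \<le> (2 * J.total + 1) / 3 ^ n" if "a \<in> J.left_ends n" for n a
    proof -
      have "0 < (1::real) / 3 ^ n" by simp
      then show ?thesis
        unfolding E_def abs_le_iff add_divide_distrib
        using ffun_survivor_increment_bounds[OF that] by linarith
    qed
    show "\<exists>b b'. b \<in> J.left_ends (Suc n) \<and> b' \<in> J.left_ends (Suc n) \<and>
        E n a = E (Suc n) b + E (Suc n) b'" if a: "a \<in> J.left_ends n" for n a
    proof (intro exI conjI)
      \<comment> \<open>the gap between the two children contributes exactly a third of 3^-n\<close>
      show "a \<in> J.left_ends (Suc n)" "a + J.shift n \<in> J.left_ends (Suc n)"
        using a by (auto simp: J.left_ends_Suc)
      have "ffun (a + J.shift n + J.len (Suc n)) = ffun (a + J.len n)"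
        using J.shift_add_len[of n] by (simp add: add.assoc)
      moreover have "1 / 3 ^ n = 3 * (1 / 3 ^ Suc n :: real)"
        by simp
      ultimately show "E n a = E (Suc n) a + E (Suc n) (a + J.shift n)"
        unfolding E_def using ffun_gap_increment[OF a] by linarith
    qed
  qed simp
  then show ?thesis by (simp add: E_def)
qed

lemma ffun_left_end: "ffun (J.left_end n w) = C.left_end n w"
proof (induction n)
  case 0
  then show ?case by (simp add: J.left_end_0 C.left_end_0 ffun_0)
next
  case (Suc n)
  define a where "a = J.left_end n w"
  have a: "a \<in> J.left_ends n" by (simp add: a_def J.left_ends_def)
  then have "a \<in> J.left_ends (Suc n)" by (simp add: J.left_ends_Suc)
  have "ffun (a + J.shift n) = ffun a + 2 / 3 ^ Suc n"
    using ffun_survivor_increment[OF \<open>a \<in> J.left_ends (Suc n)\<close>] ffun_gap_increment[OF a]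
    by simp
  then show ?case
    using Suc.IH by (simp add: J.left_end_Suc C.left_end_Suc C_shift a_def)
qed

lemma ffun_right_end: "ffun (J.left_end n w + J.len n) = C.left_end n w + C.len n"
  using ffun_survivor_increment[of "J.left_end n w" n] ffun_left_end[of n w]
  by (simp add: J.left_ends_def C_len)

lemma ffun_Mc: "ffun Mc = 1"
  using ffun_right_end[of 0] by (simp add: J.left_end_0 C.left_end_0 J.len_0 C_len Mc_eq)

lemma ffun_gap:
  assumes x: "x \<in> J.gap m (J.left_end m w)"
  shows "ffun x \<in> C.gap m (C.left_end m w)"
proof -
  define a where "a = J.left_end m w"
  have a: "a \<in> J.left_ends m" by (simp add: a_def J.left_ends_def)
  have "ffun (a + J.len (Suc m)) = C.left_end m w + C.len (Suc m)"
    using ffun_right_end[of "Suc m" "w(m := False)"]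
    by (simp add: a_def J.left_end_Suc J.left_end_upd C.left_end_Suc C.left_end_upd)
  moreover have "ffun (a + J.shift m) = C.left_end m w + C.shift m"
    using ffun_left_end[of "Suc m" "w(m := True)"]
    by (simp add: a_def J.left_end_Suc J.left_end_upd C.left_end_Suc C.left_end_upd)
  moreover have "ffun (a + J.len (Suc m)) < ffun x" "ffun x < ffun (a + J.shift m)"
    using x ffun_strict_mono_gap[OF a] by (auto simp: a_def J.gap_def)
  ultimately show ?thesis by (simp add: C.gap_def)
qed

lemma ffun_image_Aset_subset: "ffun ` Aset \<subseteq> cantor_set"
proof
  fix y assume "y \<in> ffun ` Aset"
  then obtain x where x: "x \<in> Aset" "y = ffun x" by blast
  show "y \<in> cantor_set" unfolding cantor_set_eq
  proof
    fix n
    have "x \<in> J.survivors n" using x Aset_eq by blast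
    then obtain w where w: "x \<in> {J.left_end n w..J.left_end n w + J.len n}"
      by (auto simp: J.survivors_def J.left_ends_def)
    have "0 \<le> J.left_end n w" "J.left_end n w + J.len n \<le> Mc"
      using J.left_ends_bounds[of "J.left_end n w" n] by (auto simp: J.left_ends_def Mc_eq)
    then have "ffun (J.left_end n w) \<le> ffun x" "ffun x \<le> ffun (J.left_end n w + J.len n)"
      using w by (auto intro!: ffun_mono)
    then have "y \<in> {C.left_end n w..C.left_end n w + C.len n}"
      using x ffun_left_end[of n w] ffun_right_end[of n w] by auto
    then show "y \<in> C.survivors n" by (auto simp: C.survivors_def C.left_ends_def)
  qed
qed

lemma cantor_set_subset_ffun_image: "cantor_set \<subseteq> ffun ` Aset"
proof
  fix y assume y: "y \<in> cantor_set"
  then have "0 \<le> y" "y \<le> 1" by (auto simp: cantor_set_def)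
  then obtain x where x: "0 \<le> x" "x \<le> Mc" "ffun x = y"
    using IVT'[of ffun 0 y Mc] ffun_0 ffun_Mc continuous_on_ffun J.total_pos by (auto simp: Mc_eq)
  have "x \<in> Aset"
  proof (rule ccontr)
    assume "x \<notin> Aset"
    then obtain m a where "a \<in> J.left_ends m" "x \<in> J.gap m a"
      using in_gap_if_not_Aset[of x] x by auto
    then obtain w where "x \<in> J.gap m (J.left_end m w)"
      by (auto simp: J.left_ends_def)
    then have "y \<in> C.gap m (C.left_end m w)" using ffun_gap x by blast
    moreover have "C.gap m (C.left_end m w) \<in> removed_all 1 3"
      by (auto simp: removed_all_cantor C.left_ends_def)
    ultimately show False using y by (auto simp: cantor_set_def)
  qed
  then show "y \<in> ffun ` Aset" using x by blast
qed

theorem lemma4: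
  shows "(\<exists>f'. (\<forall>x\<in>{0..Mc}. (ffun has_real_derivative f' x) (at x within {0..Mc}))
              \<and> continuous_on {0..Mc} f'
              \<and> (\<forall>x\<in>{0..Mc}. f' x = 0 \<longleftrightarrow> x \<in> Aset))
         \<and> ffun ` Aset = cantor_set"
proof (intro conjI)
  show "\<exists>f'. (\<forall>x\<in>{0..Mc}. (ffun has_real_derivative f' x) (at x within {0..Mc}))
              \<and> continuous_on {0..Mc} f'
              \<and> (\<forall>x\<in>{0..Mc}. f' x = 0 \<longleftrightarrow> x \<in> Aset)"
    using ffun_has_derivative continuous_on_gfun gfun_eq_0_iff by blast
  show "ffun ` Aset = cantor_set"
    using ffun_image_Aset_subset cantor_set_subset_ffun_image by (rule subset_antisym)
qed

end
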